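(* Let $d\ge3$, let $\mathcal{H}_A=\mathcal{H}_B=\mathbb{C}^d$ with fixed orthonormal bases, and $\mathcal{H}=\mathcal{H}_A\otimes\mathcal{H}_B$. None of the Werner states $\rho_W(t)=1-tF$ with $t\in(1/d,1/2]$ is $2$-distillable if and only if $$\|X\otimes U+Y\otimes V\|^2-\tfrac12\|X^TU+Y^TV\|^2-\tfrac12\|UX^T+VY^T\|^2+\tfrac14|\operatorname{tr}(X^TU+Y^TV)|^2\ge0$$ for all $X,Y,U,V\in M_d(\mathbb{C})$.
   Context: The flip operator is $F=\sum_{i,j}|i,j\rangle\langle j,i|$ on $\mathcal{H}$; its partial transpose is $dP$ with $P=\frac1d\sum_{i,j}|i,i\rangle\langle j,j|$, so the partial transpose of $\rho_W(t)$ is $1-tdP$. A bipartite state $\rho$ on $\mathcal{H}$ is called $k$-distillable if there exists a (non-normalized) vector $|\psi\rangle\in\mathcal{H}^{\otimes k}$, regarded as a bipartite vector in $\mathcal{H}_A^{\otimes k}\otimes\mathcal{H}_B^{\otimes k}$, of Schmidt rank at most two such that $\langle\psi|\sigma^{\otimes k}|\psi\rangle<0$, where $\sigma=1\otimes T(\rho)$ is the partial transpose of $\rho$. $\|Z\|^2=\operatorname{tr}(Z^\dagger Z)$ is the Frobenius norm, and $A\otimes B=[a_{ij}B]$ for $A=[a_{ij}]$. *)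

theory Defs
  imports Complex_Main
begin

(* Operators on H = C^d (x) C^d are functions on index pairs (i,j), i,j < d:
   op a b = <a| op |b>.  Matrices in M_d(C) are functions nat => nat => complex,
   only entries with indices < d matter. *)

type_synonym bop = "nat \<times> nat \<Rightarrow> nat \<times> nat \<Rightarrow> complex"
type_synonym cmat = "nat \<Rightarrow> nat \<Rightarrow> complex"

definition flip :: bop where
  "flip = (\<lambda>(i, j) (k, l). if i = l \<and> j = k then 1 else 0)"

definition werner :: "real \<Rightarrow> bop" where
  "werner t = (\<lambda>a b. (if a = b then 1 else 0) - complex_of_real t * flip a b)"

definition ptrans :: "bop \<Rightarrow> bop" where
  "ptrans \<rho> = (\<lambda>(i, j) (k, l). \<rho> (i, l) (k, j))"

text \<open>Basis index set of H^(x)k: lists of k pairs (a_n, b_n) with a_n, b_n < d.\<close>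
definition idx :: "nat \<Rightarrow> nat \<Rightarrow> (nat \<times> nat) list set" where
  "idx d k = {xs. length xs = k \<and> set xs \<subseteq> {0..<d} \<times> {0..<d}}"

definition tensor_power_form :: "nat \<Rightarrow> nat \<Rightarrow> bop \<Rightarrow> ((nat \<times> nat) list \<Rightarrow> complex) \<Rightarrow> complex" where
  "tensor_power_form d k \<sigma> \<psi> =
     (\<Sum>x\<in>idx d k. \<Sum>y\<in>idx d k. cnj (\<psi> x) * (\<Prod>n<k. \<sigma> (x ! n) (y ! n)) * \<psi> y)"

text \<open>Schmidt rank at most r of psi regarded as a vector in H_A^(x)k (x) H_B^(x)k:
  psi is a sum of r product vectors alpha_m (x) beta_m (the A-index of basis vector x
  is map fst x, the B-index is map snd x).\<close>
definition schmidt_rank_le :: "nat \<Rightarrow> nat \<Rightarrow> nat \<Rightarrow> ((nat \<times> nat) list \<Rightarrow> complex) \<Rightarrow> bool" where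
  "schmidt_rank_le d k r \<psi> \<longleftrightarrow>
     (\<exists>\<alpha> \<beta> :: nat \<Rightarrow> nat list \<Rightarrow> complex.
        \<forall>x\<in>idx d k. \<psi> x = (\<Sum>m<r. \<alpha> m (map fst x) * \<beta> m (map snd x)))"

definition k_distillable :: "nat \<Rightarrow> nat \<Rightarrow> bop \<Rightarrow> bool" where
  "k_distillable d k \<rho> \<longleftrightarrow>
     (\<exists>\<psi>. schmidt_rank_le d k 2 \<psi> \<and>
        (let q = tensor_power_form d k (ptrans \<rho>) \<psi> in Im q = 0 \<and> Re q < 0))"

definition mtrans :: "cmat \<Rightarrow> cmat" where
  "mtrans X = (\<lambda>i j. X j i)"

definition mmult :: "nat \<Rightarrow> cmat \<Rightarrow> cmat \<Rightarrow> cmat" where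
  "mmult d X Y = (\<lambda>i j. \<Sum>m<d. X i m * Y m j)"

definition madd :: "cmat \<Rightarrow> cmat \<Rightarrow> cmat" where
  "madd X Y = (\<lambda>i j. X i j + Y i j)"

definition mtrace :: "nat \<Rightarrow> cmat \<Rightarrow> complex" where
  "mtrace d X = (\<Sum>i<d. X i i)"

definition frob_sq :: "nat \<Rightarrow> cmat \<Rightarrow> real" where
  "frob_sq d Z = (\<Sum>i<d. \<Sum>j<d. (cmod (Z i j))\<^sup>2)"

text \<open>Kronecker product A (x) B = [a_ij B] of d x d matrices, a d^2 x d^2 matrix
  with row index d*i+k and column index d*j+l.\<close>
definition kron :: "nat \<Rightarrow> cmat \<Rightarrow> cmat \<Rightarrow> cmat" where
  "kron d A B = (\<lambda>r c. A (r div d) (c div d) * B (r mod d) (c mod d))"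

end

theory Submission
  imports Defs
begin

text \<open>
  Write a vector of \<open>H \<otimes> H\<close> as an array \<open>\<phi> p q\<close>, \<open>p\<close> and \<open>q\<close> indexing the two copies of \<open>H\<close>.
  The partial transpose of \<open>\<rho>\<^sub>W(t)\<close> is \<open>1 - t \<Phi>\<Phi>\<^sup>*\<close> with \<open>\<Phi> = \<Sum>\<^sub>k |kk\<rangle>\<close>, so
  \<open>\<langle>\<phi>|\<sigma>\<otimes>\<sigma>|\<phi>\<rangle> = N - t B\<^sub>1 - t B\<^sub>2 + t\<^sup>2 C\<close>, where \<open>N = \<parallel>\<phi>\<parallel>\<^sup>2\<close> and \<open>B\<^sub>1, B\<^sub>2, C\<close> are the
  squared norms of the contractions of \<open>\<phi>\<close> with \<open>\<Phi>\<close> in the first, second and both copies.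
  For \<open>\<phi> = X\<otimes>U + Y\<otimes>V\<close> (Schmidt rank at most two) these quantities are the Frobenius norms
  and the trace of the matrix inequality, which is therefore the value of the form at \<open>t = 1/2\<close>.
  Conversely, the inequality at \<open>t = 1/2\<close> applied to states supported on a single basis vector
  of one copy gives \<open>B\<^sub>1, B\<^sub>2 \<le> 2N\<close>, and then
  \<open>N - tB\<^sub>1 - tB\<^sub>2 + t\<^sup>2C = (1-2t)\<^sup>2N + 2t(1-2t)(2N - B\<^sub>1/2 - B\<^sub>2/2) + 4t\<^sup>2(value at 1/2)\<close>
  is nonnegative for all \<open>0 \<le> t \<le> 1/2\<close>.
\<close>

type_synonym vec2 = "nat \<times> nat \<Rightarrow> nat \<times> nat \<Rightarrow> complex"

abbreviation pairs :: "nat \<Rightarrow> (nat \<times> nat) set" where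
  "pairs d \<equiv> {..<d} \<times> {..<d}"

lemma sum_pairs: "(\<Sum>p\<in>pairs d. f p) = (\<Sum>a<d. \<Sum>b<d. f (a, b))"
  by (simp add: sum.cartesian_product)

lemma sum_pairs_diag: "(\<Sum>p\<in>pairs d. if fst p = snd p then f p else 0) = (\<Sum>k<d. f (k, k))"
  unfolding sum_pairs by simp

lemma sum_lessThan_square:
  fixes d :: nat
  assumes "0 < d"
  shows "(\<Sum>r<d * d. f r) = (\<Sum>a<d. \<Sum>b<d. f (d * a + b))"
proof -
  have "(\<Sum>r<d * d. f r) = (\<Sum>p\<in>pairs d. f (d * fst p + snd p))"
  proof (rule sum.reindex_bij_witness[where i = "\<lambda>p. d * fst p + snd p" and j = "\<lambda>r. (r div d, r mod d)"])
    fix p assume "p \<in> pairs d"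
    then have "d * fst p + snd p < d * (fst p + 1)" "fst p + 1 \<le> d" by auto
    then show "d * fst p + snd p \<in> {..<d * d}"
      by (metis lessThan_iff mult_le_mono2 order_less_le_trans)
  qed (use assms in \<open>auto simp: less_mult_imp_div_less\<close>)
  then show ?thesis unfolding sum_pairs by simp
qed

lemma idx_2: "idx d 2 = (\<lambda>(p, q). [p, q]) ` (pairs d \<times> pairs d)"
  unfolding idx_def by (auto simp: numeral_2_eq_2 length_Suc_conv)

lemma sum_idx_2: "(\<Sum>x\<in>idx d 2. f x) = (\<Sum>p\<in>pairs d. \<Sum>q\<in>pairs d. f [p, q])"
proof -
  have "inj_on (\<lambda>(p, q). [p, q]) (pairs d \<times> pairs d)" by (auto simp: inj_on_def)
  then show ?thesis
    unfolding idx_2 by (simp add: sum.reindex sum.cartesian_product split_def)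
qed

lemma tensor_power_form_2:
  "tensor_power_form d 2 \<sigma> \<psi> =
     (\<Sum>p\<in>pairs d. \<Sum>q\<in>pairs d. cnj (\<psi> [p, q]) *
        (\<Sum>p'\<in>pairs d. \<sigma> p p' * (\<Sum>q'\<in>pairs d. \<sigma> q q' * \<psi> [p', q'])))"
  unfolding tensor_power_form_def sum_idx_2
  by (simp add: numeral_2_eq_2 sum_distrib_left mult_ac)

lemma ptrans_werner:
  "ptrans (werner t) p p' =
     (if p = p' then 1 else 0) - of_real t * (if fst p = snd p \<and> fst p' = snd p' then 1 else 0)"
  by (cases p; cases p') (auto simp: ptrans_def werner_def flip_def)

lemma ptrans_werner_apply:
  assumes "p \<in> pairs d"
  shows "(\<Sum>p'\<in>pairs d. ptrans (werner t) p p' * f p') =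
    f p - of_real t * (if fst p = snd p then \<Sum>k<d. f (k, k) else 0)"
proof -
  have "ptrans (werner t) p p' * f p' =
      (if p = p' then f p' else 0)
      - of_real t * (if fst p = snd p then 1 else 0) * (if fst p' = snd p' then f p' else 0)" for p'
    by (simp add: ptrans_werner algebra_simps)
  then show ?thesis
    using assms by (simp add: sum_subtractf sum_distrib_left[symmetric] sum_pairs_diag)
qed

definition norm2 :: "nat \<Rightarrow> vec2 \<Rightarrow> real" where
  "norm2 d \<phi> = (\<Sum>p\<in>pairs d. \<Sum>q\<in>pairs d. (cmod (\<phi> p q))\<^sup>2)"

definition contract_fst_norm2 :: "nat \<Rightarrow> vec2 \<Rightarrow> real" where
  "contract_fst_norm2 d \<phi> = (\<Sum>q\<in>pairs d. (cmod (\<Sum>k<d. \<phi> (k, k) q))\<^sup>2)"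

definition contract_snd_norm2 :: "nat \<Rightarrow> vec2 \<Rightarrow> real" where
  "contract_snd_norm2 d \<phi> = (\<Sum>p\<in>pairs d. (cmod (\<Sum>k<d. \<phi> p (k, k)))\<^sup>2)"

definition contract_both_norm2 :: "nat \<Rightarrow> vec2 \<Rightarrow> real" where
  "contract_both_norm2 d \<phi> = (cmod (\<Sum>k<d. \<Sum>l<d. \<phi> (k, k) (l, l)))\<^sup>2"

definition werner_form :: "nat \<Rightarrow> real \<Rightarrow> vec2 \<Rightarrow> real" where
  "werner_form d t \<phi> =
     norm2 d \<phi> - t * contract_fst_norm2 d \<phi> - t * contract_snd_norm2 d \<phi>
     + t\<^sup>2 * contract_both_norm2 d \<phi>"

lemma norm2_nonneg: "0 \<le> norm2 d \<phi>"
  unfolding norm2_def by (intro sum_nonneg) simp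

lemma ptrans_werner_tensor_apply:
  assumes "p \<in> pairs d" "q \<in> pairs d"
  shows "(\<Sum>p'\<in>pairs d. ptrans (werner t) p p' * (\<Sum>q'\<in>pairs d. ptrans (werner t) q q' * \<phi> p' q')) =
    \<phi> p q
    - of_real t * (if fst q = snd q then \<Sum>l<d. \<phi> p (l, l) else 0)
    - of_real t * (if fst p = snd p then \<Sum>k<d. \<phi> (k, k) q else 0)
    + (of_real t)\<^sup>2 * (if fst p = snd p \<and> fst q = snd q then \<Sum>k<d. \<Sum>l<d. \<phi> (k, k) (l, l) else 0)"
proof -
  have "(\<Sum>p'\<in>pairs d. ptrans (werner t) p p' * (\<Sum>q'\<in>pairs d. ptrans (werner t) q q' * \<phi> p' q'))
      = (\<Sum>p'\<in>pairs d. ptrans (werner t) p p'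
          * (\<phi> p' q - of_real t * (if fst q = snd q then \<Sum>l<d. \<phi> p' (l, l) else 0)))"
    using assms(2) by (simp add: ptrans_werner_apply)
  also have "\<dots> = \<phi> p q - of_real t * (if fst q = snd q then \<Sum>l<d. \<phi> p (l, l) else 0)
      - of_real t * (if fst p = snd p
          then \<Sum>k<d. \<phi> (k, k) q - of_real t * (if fst q = snd q then \<Sum>l<d. \<phi> (k, k) (l, l) else 0)
          else 0)"
    using assms(1) by (subst ptrans_werner_apply) simp_all
  also have "\<dots> = \<phi> p q
      - of_real t * (if fst q = snd q then \<Sum>l<d. \<phi> p (l, l) else 0)
      - of_real t * (if fst p = snd p then \<Sum>k<d. \<phi> (k, k) q else 0)
      + (of_real t)\<^sup>2 * (if fst p = snd p \<and> fst q = snd q then \<Sum>k<d. \<Sum>l<d. \<phi> (k, k) (l, l) else 0)"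
    by (cases "fst q = snd q")
      (simp_all add: sum_subtractf sum_distrib_left[symmetric] algebra_simps power2_eq_square)
  finally show ?thesis .
qed

lemma tensor_power_form_werner:
  assumes "\<And>p q. p \<in> pairs d \<Longrightarrow> q \<in> pairs d \<Longrightarrow> \<psi> [p, q] = \<phi> p q"
  shows "tensor_power_form d 2 (ptrans (werner t)) \<psi> = of_real (werner_form d t \<phi>)"
proof -
  define s1 where "s1 q = (\<Sum>k<d. \<phi> (k, k) q)" for q
  define s2 where "s2 p = (\<Sum>l<d. \<phi> p (l, l))" for p
  define c where "c = (\<Sum>k<d. \<Sum>l<d. \<phi> (k, k) (l, l))"
  have N: "(\<Sum>p\<in>pairs d. \<Sum>q\<in>pairs d. cnj (\<phi> p q) * \<phi> p q) = of_real (norm2 d \<phi>)"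
    unfolding norm2_def by (simp only: of_real_sum complex_norm_square) (simp add: mult.commute)
  have B1: "(\<Sum>p\<in>pairs d. \<Sum>q\<in>pairs d. cnj (\<phi> p q) * (if fst p = snd p then s1 q else 0))
      = of_real (contract_fst_norm2 d \<phi>)"
  proof -
    have "(\<Sum>p\<in>pairs d. \<Sum>q\<in>pairs d. cnj (\<phi> p q) * (if fst p = snd p then s1 q else 0))
        = (\<Sum>q\<in>pairs d. s1 q * cnj (s1 q))"
      by (subst sum.swap) (simp add: if_distrib sum_pairs_diag s1_def sum_distrib_left mult.commute
          cong: if_cong)
    then show ?thesis unfolding contract_fst_norm2_def of_real_sum complex_norm_square s1_def .
  qed
  have B2: "(\<Sum>p\<in>pairs d. \<Sum>q\<in>pairs d. cnj (\<phi> p q) * (if fst q = snd q then s2 p else 0))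
      = of_real (contract_snd_norm2 d \<phi>)"
  proof -
    have "(\<Sum>p\<in>pairs d. \<Sum>q\<in>pairs d. cnj (\<phi> p q) * (if fst q = snd q then s2 p else 0))
        = (\<Sum>p\<in>pairs d. s2 p * cnj (s2 p))"
      by (simp add: if_distrib sum_pairs_diag s2_def sum_distrib_left mult.commute cong: if_cong)
    then show ?thesis unfolding contract_snd_norm2_def of_real_sum complex_norm_square s2_def .
  qed
  have C: "(\<Sum>p\<in>pairs d. \<Sum>q\<in>pairs d. cnj (\<phi> p q) * (if fst p = snd p \<and> fst q = snd q then c else 0))
      = of_real (contract_both_norm2 d \<phi>)"
  proof -
    have "(\<Sum>p\<in>pairs d. \<Sum>q\<in>pairs d. cnj (\<phi> p q) * (if fst p = snd p \<and> fst q = snd q then c else 0))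
        = c * (\<Sum>p\<in>pairs d. if fst p = snd p
            then \<Sum>q\<in>pairs d. if fst q = snd q then cnj (\<phi> p q) else 0 else 0)"
      by (auto simp: sum_distrib_left intro!: sum.cong)
    also have "\<dots> = c * cnj c"
      by (simp only: sum_pairs_diag) (simp add: c_def)
    finally show ?thesis unfolding contract_both_norm2_def complex_norm_square c_def .
  qed
  have "tensor_power_form d 2 (ptrans (werner t)) \<psi>
      = (\<Sum>p\<in>pairs d. \<Sum>q\<in>pairs d. cnj (\<phi> p q) *
          (\<phi> p q - of_real t * (if fst q = snd q then s2 p else 0)
           - of_real t * (if fst p = snd p then s1 q else 0)
           + (of_real t)\<^sup>2 * (if fst p = snd p \<and> fst q = snd q then c else 0)))"
    unfolding tensor_power_form_2 using assms
    by (intro sum.cong refl) (simp add: ptrans_werner_tensor_apply s1_def s2_def c_def)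
  also have "\<dots> = (\<Sum>p\<in>pairs d. \<Sum>q\<in>pairs d. cnj (\<phi> p q) * \<phi> p q)
      - of_real t * (\<Sum>p\<in>pairs d. \<Sum>q\<in>pairs d. cnj (\<phi> p q) * (if fst p = snd p then s1 q else 0))
      - of_real t * (\<Sum>p\<in>pairs d. \<Sum>q\<in>pairs d. cnj (\<phi> p q) * (if fst q = snd q then s2 p else 0))
      + (of_real t)\<^sup>2 * (\<Sum>p\<in>pairs d. \<Sum>q\<in>pairs d.
          cnj (\<phi> p q) * (if fst p = snd p \<and> fst q = snd q then c else 0))"
    by (simp add: algebra_simps sum.distrib sum_subtractf sum_distrib_left)
  finally show ?thesis unfolding N B1 B2 C werner_form_def by simp
qed

text \<open>The coefficients of \<open>X \<otimes> U + Y \<otimes> V\<close>: the \<open>A\<close>-factor \<open>X\<close> carries the \<open>A\<close>-indices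
  \<open>(fst p, fst q)\<close> of both copies, the \<open>B\<close>-factor \<open>U\<close> the \<open>B\<close>-indices \<open>(snd p, snd q)\<close>.\<close>
definition schmidt2 :: "cmat \<Rightarrow> cmat \<Rightarrow> cmat \<Rightarrow> cmat \<Rightarrow> vec2" where
  "schmidt2 X Y U V p q =
     X (fst p) (fst q) * U (snd p) (snd q) + Y (fst p) (fst q) * V (snd p) (snd q)"

lemma k_distillable_2_werner_iff:
  "k_distillable d 2 (werner t) \<longleftrightarrow> (\<exists>X Y U V. werner_form d t (schmidt2 X Y U V) < 0)"
proof
  assume "k_distillable d 2 (werner t)"
  then obtain \<psi> and \<alpha> \<beta> :: "nat \<Rightarrow> nat list \<Rightarrow> complex"
    where \<psi>: "\<forall>x\<in>idx d 2. \<psi> x = (\<Sum>m<2. \<alpha> m (map fst x) * \<beta> m (map snd x))"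
      and neg: "Re (tensor_power_form d 2 (ptrans (werner t)) \<psi>) < 0"
    unfolding k_distillable_def schmidt_rank_le_def Let_def by blast
  let ?\<phi> = "schmidt2 (\<lambda>i j. \<alpha> 0 [i, j]) (\<lambda>i j. \<alpha> 1 [i, j]) (\<lambda>i j. \<beta> 0 [i, j]) (\<lambda>i j. \<beta> 1 [i, j])"
  have "\<psi> [p, q] = ?\<phi> p q" if "p \<in> pairs d" "q \<in> pairs d" for p q
  proof -
    have "[p, q] \<in> idx d 2" using that unfolding idx_2 by auto
    with \<psi> show ?thesis by (simp add: schmidt2_def numeral_2_eq_2)
  qed
  then have "tensor_power_form d 2 (ptrans (werner t)) \<psi> = of_real (werner_form d t ?\<phi>)"
    by (rule tensor_power_form_werner)
  with neg show "\<exists>X Y U V. werner_form d t (schmidt2 X Y U V) < 0" by auto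
next
  assume "\<exists>X Y U V. werner_form d t (schmidt2 X Y U V) < 0"
  then obtain X Y U V where neg: "werner_form d t (schmidt2 X Y U V) < 0" by blast
  define \<psi> where "\<psi> x = schmidt2 X Y U V (x ! 0) (x ! 1)" for x :: "(nat \<times> nat) list"
  define \<alpha> :: "nat \<Rightarrow> nat list \<Rightarrow> complex"
    where "\<alpha> m xs = (if m = 0 then X else Y) (xs ! 0) (xs ! 1)" for m xs
  define \<beta> :: "nat \<Rightarrow> nat list \<Rightarrow> complex"
    where "\<beta> m xs = (if m = 0 then U else V) (xs ! 0) (xs ! 1)" for m xs
  have "schmidt_rank_le d 2 2 \<psi>"
    unfolding schmidt_rank_le_def
  proof (intro exI ballI)
    fix x assume "x \<in> idx d 2"
    then obtain p q where "x = [p, q]" unfolding idx_2 by auto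
    then show "\<psi> x = (\<Sum>m<2. \<alpha> m (map fst x) * \<beta> m (map snd x))"
      by (simp add: \<psi>_def \<alpha>_def \<beta>_def schmidt2_def numeral_2_eq_2)
  qed
  moreover have "tensor_power_form d 2 (ptrans (werner t)) \<psi> = of_real (werner_form d t (schmidt2 X Y U V))"
    by (rule tensor_power_form_werner) (simp add: \<psi>_def)
  ultimately show "k_distillable d 2 (werner t)"
    using neg unfolding k_distillable_def Let_def by auto
qed

lemma werner_form_half_schmidt2:
  assumes "0 < d"
  shows "werner_form d (1/2) (schmidt2 X Y U V) =
       frob_sq (d*d) (madd (kron d X U) (kron d Y V))
       - 1/2 * frob_sq d (madd (mmult d (mtrans X) U) (mmult d (mtrans Y) V))
       - 1/2 * frob_sq d (madd (mmult d U (mtrans X)) (mmult d V (mtrans Y)))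
       + 1/4 * (cmod (mtrace d (madd (mmult d (mtrans X) U) (mmult d (mtrans Y) V))))\<^sup>2"
proof -
  let ?\<phi> = "schmidt2 X Y U V"
  have "frob_sq (d*d) (madd (kron d X U) (kron d Y V)) = norm2 d ?\<phi>"
    unfolding frob_sq_def norm2_def sum_pairs sum_lessThan_square[OF assms]
    by (simp add: madd_def kron_def schmidt2_def)
  moreover have "frob_sq d (madd (mmult d (mtrans X) U) (mmult d (mtrans Y) V)) = contract_fst_norm2 d ?\<phi>"
    unfolding frob_sq_def contract_fst_norm2_def sum_pairs
    by (simp add: madd_def mmult_def mtrans_def schmidt2_def sum.distrib)
  moreover have "frob_sq d (madd (mmult d U (mtrans X)) (mmult d V (mtrans Y))) = contract_snd_norm2 d ?\<phi>"
    unfolding frob_sq_def contract_snd_norm2_def sum_pairs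
    by (subst sum.swap) (simp add: madd_def mmult_def mtrans_def schmidt2_def sum.distrib mult.commute)
  moreover have "mtrace d (madd (mmult d (mtrans X) U) (mmult d (mtrans Y) V))
      = (\<Sum>k<d. \<Sum>l<d. ?\<phi> (k, k) (l, l))"
    unfolding mtrace_def
    by (subst sum.swap) (simp add: madd_def mmult_def mtrans_def schmidt2_def sum.distrib)
  ultimately show ?thesis
    unfolding werner_form_def contract_both_norm2_def by (simp add: power2_eq_square)
qed

lemma schmidt2_swap:
  "(\<lambda>p q. schmidt2 X Y U V q p) = schmidt2 (mtrans X) (mtrans Y) (mtrans U) (mtrans V)"
  by (simp add: fun_eq_iff schmidt2_def mtrans_def)

lemma werner_form_column:
  assumes "r \<in> pairs d" "fst r \<noteq> snd r"
  shows "werner_form d t (\<lambda>p q. if q = r then f p else 0) =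
    (\<Sum>p\<in>pairs d. (cmod (f p))\<^sup>2) - t * (cmod (\<Sum>k<d. f (k, k)))\<^sup>2"
proof -
  let ?\<phi> = "\<lambda>p q. if q = r then f p else 0"
  have "norm2 d ?\<phi> = (\<Sum>p\<in>pairs d. (cmod (f p))\<^sup>2)"
    unfolding norm2_def using assms(1) by (simp add: if_distrib[of "\<lambda>z. (cmod z)\<^sup>2"] cong: if_cong)
  moreover have "contract_fst_norm2 d ?\<phi> = (cmod (\<Sum>k<d. f (k, k)))\<^sup>2"
  proof -
    have "(\<Sum>k<d. ?\<phi> (k, k) q) = (if q = r then \<Sum>k<d. f (k, k) else 0)" for q
      by simp
    then show ?thesis
      unfolding contract_fst_norm2_def using assms(1)
      by (simp add: if_distrib[of "\<lambda>z. (cmod z)\<^sup>2"] cong: if_cong)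
  qed
  moreover have "contract_snd_norm2 d ?\<phi> = 0" "contract_both_norm2 d ?\<phi> = 0"
    using assms(2) unfolding contract_snd_norm2_def contract_both_norm2_def by (auto intro!: sum.neutral)
  ultimately show ?thesis unfolding werner_form_def by simp
qed

lemma contract_fst_norm2_le:
  assumes "2 \<le> d" and half: "\<And>X Y U V. 0 \<le> werner_form d (1/2) (schmidt2 X Y U V)"
  shows "contract_fst_norm2 d (schmidt2 X Y U V) \<le> 2 * norm2 d (schmidt2 X Y U V)"
proof -
  let ?\<phi> = "schmidt2 X Y U V"
  have column: "(cmod (\<Sum>k<d. ?\<phi> (k, k) q))\<^sup>2 \<le> 2 * (\<Sum>p\<in>pairs d. (cmod (?\<phi> p q))\<^sup>2)" for q
  proof -
    text \<open>Keep only the column \<open>q\<close> of the second copy and move it to the off-diagonal basis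
      vector \<open>(0, 1)\<close>, where contractions in the second copy vanish.\<close>
    define X' :: cmat where "X' i j = (if j = 0 then X i (fst q) else 0)" for i j
    define Y' :: cmat where "Y' i j = (if j = 0 then Y i (fst q) else 0)" for i j
    define U' :: cmat where "U' i j = (if j = 1 then U i (snd q) else 0)" for i j
    define V' :: cmat where "V' i j = (if j = 1 then V i (snd q) else 0)" for i j
    have "schmidt2 X' Y' U' V' = (\<lambda>p q'. if q' = (0, 1) then ?\<phi> p q else 0)"
      by (auto simp: fun_eq_iff schmidt2_def X'_def Y'_def U'_def V'_def)
    with half[of X' Y' U' V'] show ?thesis
      using \<open>2 \<le> d\<close> by (simp add: werner_form_column)
  qed
  have "contract_fst_norm2 d ?\<phi> \<le> (\<Sum>q\<in>pairs d. 2 * (\<Sum>p\<in>pairs d. (cmod (?\<phi> p q))\<^sup>2))"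
    unfolding contract_fst_norm2_def by (intro sum_mono column)
  also have "\<dots> = 2 * norm2 d ?\<phi>"
    unfolding norm2_def sum_distrib_left[symmetric] by (subst sum.swap) (rule refl)
  finally show ?thesis .
qed

lemma contract_snd_norm2_le:
  assumes "2 \<le> d" and half: "\<And>X Y U V. 0 \<le> werner_form d (1/2) (schmidt2 X Y U V)"
  shows "contract_snd_norm2 d (schmidt2 X Y U V) \<le> 2 * norm2 d (schmidt2 X Y U V)"
proof -
  let ?\<phi> = "schmidt2 X Y U V"
  have "contract_snd_norm2 d ?\<phi> = contract_fst_norm2 d (\<lambda>p q. ?\<phi> q p)"
    unfolding contract_snd_norm2_def contract_fst_norm2_def ..
  moreover have "norm2 d ?\<phi> = norm2 d (\<lambda>p q. ?\<phi> q p)"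
    unfolding norm2_def by (rule sum.swap)
  ultimately show ?thesis
    using contract_fst_norm2_le[OF assms] by (simp add: schmidt2_swap)
qed

lemma werner_form_nonneg_below_half:
  assumes "0 \<le> t" "t \<le> 1/2" "0 \<le> werner_form d (1/2) \<phi>"
    and "contract_fst_norm2 d \<phi> \<le> 2 * norm2 d \<phi>" "contract_snd_norm2 d \<phi> \<le> 2 * norm2 d \<phi>"
  shows "0 \<le> werner_form d t \<phi>"
proof -
  define N B1 B2 where "N = norm2 d \<phi>" and "B1 = contract_fst_norm2 d \<phi>"
    and "B2 = contract_snd_norm2 d \<phi>"
  have "werner_form d t \<phi> =
      (1 - 2*t)\<^sup>2 * N + 2*t*(1 - 2*t) * (2*N - B1/2 - B2/2) + 4*t\<^sup>2 * werner_form d (1/2) \<phi>"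
    unfolding werner_form_def N_def B1_def B2_def by (simp add: algebra_simps power2_eq_square)
  moreover have "0 \<le> N" unfolding N_def by (rule norm2_nonneg)
  moreover have "0 \<le> 2*t*(1 - 2*t) * (2*N - B1/2 - B2/2)"
    using assms unfolding N_def B1_def B2_def by (intro mult_nonneg_nonneg) auto
  ultimately show ?thesis using assms(3) by simp
qed

lemma werner_form_schmidt2_nonneg:
  assumes "2 \<le> d" "0 \<le> t" "t \<le> 1/2"
    and half: "\<And>X Y U V. 0 \<le> werner_form d (1/2) (schmidt2 X Y U V)"
  shows "0 \<le> werner_form d t (schmidt2 X Y U V)"
  by (rule werner_form_nonneg_below_half[OF assms(2,3) half
        contract_fst_norm2_le[OF assms(1) half] contract_snd_norm2_le[OF assms(1) half]])

theorem proposition3p2: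
  fixes d :: nat
  assumes "d \<ge> 3"
  shows "(\<forall>t::real. 1 / real d < t \<and> t \<le> 1/2 \<longrightarrow> \<not> k_distillable d 2 (werner t))
    \<longleftrightarrow>
    (\<forall>X Y U V :: cmat.
       frob_sq (d*d) (madd (kron d X U) (kron d Y V))
       - 1/2 * frob_sq d (madd (mmult d (mtrans X) U) (mmult d (mtrans Y) V))
       - 1/2 * frob_sq d (madd (mmult d U (mtrans X)) (mmult d V (mtrans Y)))
       + 1/4 * (cmod (mtrace d (madd (mmult d (mtrans X) U) (mmult d (mtrans Y) V))))\<^sup>2
       \<ge> 0)" (is "?lhs \<longleftrightarrow> ?rhs")
proof -
  have "0 < d" "2 \<le> d" "1 / real d < 1/2" using assms by (auto simp: field_simps)
  have "?lhs \<longleftrightarrow> (\<forall>X Y U V. 0 \<le> werner_form d (1/2) (schmidt2 X Y U V))"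
  proof
    assume ?lhs
    then have "\<not> k_distillable d 2 (werner (1/2))" using \<open>1 / real d < 1/2\<close> by blast
    then show "\<forall>X Y U V. 0 \<le> werner_form d (1/2) (schmidt2 X Y U V)"
      unfolding k_distillable_2_werner_iff by (simp add: not_less)
  next
    assume half: "\<forall>X Y U V. 0 \<le> werner_form d (1/2) (schmidt2 X Y U V)"
    have "\<not> k_distillable d 2 (werner t)" if "1 / real d < t" "t \<le> 1/2" for t
    proof -
      have "0 \<le> t" using that(1) divide_nonneg_nonneg[of 1 "real d"] by linarith
      with that(2) show ?thesis
        using werner_form_schmidt2_nonneg[OF \<open>2 \<le> d\<close> _ _ half[rule_format]]
        unfolding k_distillable_2_werner_iff by (simp add: not_less)
    qed
    then show ?lhs by blast
  qed
  also have "\<dots> \<longleftrightarrow> ?rhs"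
    by (simp only: werner_form_half_schmidt2[OF \<open>0 < d\<close>])
  finally show ?thesis .
qed

end
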